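(* There is an absolute constant $C$ such that for every simple temporal clique on $n$ vertices and every forward fireworks cover $S^-_T$ of it (for any outcome of the arbitrary choices in the construction), $|S^-_T|\le \frac{3}{4}\binom{n}{2}+Cn$.
   Context: A simple temporal clique is a pair $\mathcal{G}=(G,\lambda)$ where $G=(V,E)$ is the complete graph on a finite set $V$ of $n$ vertices and $\lambda:E\to\mathbb{N}$ assigns to each edge a single integer label such that any two distinct edges sharing an endpoint have different labels; the label of an arc $(x,y)$ is $\lambda(\{x,y\})$. For a vertex $v$, $e^-(v)$ is the edge incident to $v$ with smallest label. Forward construction: let $E^-$ be the set of arcs $(u,v)$ with $\{u,v\}=e^-(v)$, except that if $e^-(u)=e^-(v)=\{u,v\}$ only one of the two arcs $(u,v),(v,u)$ is included (arbitrarily). Initialize $E^-_T:=E^-$. For every vertex $v$ of out-degree at least $2$ in $(V,E^-)$, let $(v,u_1),\dots,(v,u_\ell)$ be its out-arcs in $E^-$, where $(v,u_\ell)$ has the largest label; for each $i<\ell$, if $u_i$ has out-degree $0$ in $(V,E^-)$, replace $(v,u_i)$ by $(u_i,v)$ in $E^-_T$, and otherwise remove $(v,u_i)$ from $E^-_T$. An emitter is a vertex of out-degree $0$ in $(V,E^-_T)$. The forward fireworks cover is $S^-_T=\{\{u,v\}\in E:(u,v)\in E^-_T\}\cup\{\{u,v\}\in E: u \text{ is an emitter}\}$. *)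

theory Defs
  imports Complex_Main
begin

text \<open>Vertices are natural numbers (any finite vertex set can be relabelled into nat).
  Edges of the complete graph on V are the sets {x,y} with x, y in V, x distinct from y.
  Arcs are ordered pairs.\<close>

definition clique_edges :: "nat set \<Rightarrow> nat set set" where
  "clique_edges V = {{x, y} | x y. x \<in> V \<and> y \<in> V \<and> x \<noteq> y}"

definition simple_temporal_clique :: "nat set \<Rightarrow> (nat set \<Rightarrow> nat) \<Rightarrow> bool" where
  "simple_temporal_clique V lab \<longleftrightarrow> finite V \<and>
     (\<forall>e \<in> clique_edges V. \<forall>f \<in> clique_edges V. e \<noteq> f \<and> e \<inter> f \<noteq> {} \<longrightarrow> lab e \<noteq> lab f)"

definition emin :: "nat set \<Rightarrow> (nat set \<Rightarrow> nat) \<Rightarrow> nat \<Rightarrow> nat set" where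
  "emin V lab v = (ARG_MIN lab e. e \<in> clique_edges V \<and> v \<in> e)"

text \<open>Admissible choices of E^-: all arcs (u,v) with {u,v} = e^-(v), except that when
  e^-(u) = e^-(v) = {u,v} exactly one of (u,v), (v,u) is included (arbitrarily).\<close>
definition valid_Eminus :: "nat set \<Rightarrow> (nat set \<Rightarrow> nat) \<Rightarrow> (nat \<times> nat) set \<Rightarrow> bool" where
  "valid_Eminus V lab A \<longleftrightarrow>
     (\<forall>(u, v) \<in> A. u \<in> V \<and> v \<in> V \<and> u \<noteq> v \<and> {u, v} = emin V lab v) \<and>
     (\<forall>u \<in> V. \<forall>v \<in> V. u \<noteq> v \<and> {u, v} = emin V lab v \<longrightarrow>
        (if emin V lab u = {u, v}
         then ((u, v) \<in> A \<longleftrightarrow> (v, u) \<notin> A)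
         else (u, v) \<in> A))"

definition outdeg :: "(nat \<times> nat) set \<Rightarrow> nat \<Rightarrow> nat" where
  "outdeg A v = card {u. (v, u) \<in> A}"

definition non_top_arc :: "(nat set \<Rightarrow> nat) \<Rightarrow> (nat \<times> nat) set \<Rightarrow> nat \<Rightarrow> nat \<Rightarrow> bool" where
  "non_top_arc lab A v u \<longleftrightarrow> (v, u) \<in> A \<and> outdeg A v \<ge> 2 \<and>
     (\<exists>w. (v, w) \<in> A \<and> lab {v, w} > lab {v, u})"

definition ET :: "(nat set \<Rightarrow> nat) \<Rightarrow> (nat \<times> nat) set \<Rightarrow> (nat \<times> nat) set" where
  "ET lab A = {(v, u). (v, u) \<in> A \<and> \<not> non_top_arc lab A v u}
            \<union> {(u, v). non_top_arc lab A v u \<and> outdeg A u = 0}"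

definition emitters :: "nat set \<Rightarrow> (nat set \<Rightarrow> nat) \<Rightarrow> (nat \<times> nat) set \<Rightarrow> nat set" where
  "emitters V lab A = {u \<in> V. outdeg (ET lab A) u = 0}"

definition fireworks_cover :: "nat set \<Rightarrow> (nat set \<Rightarrow> nat) \<Rightarrow> (nat \<times> nat) set \<Rightarrow> nat set set" where
  "fireworks_cover V lab A =
     {{u, v} | u v. (u, v) \<in> ET lab A}
     \<union> {e \<in> clique_edges V. \<exists>u \<in> emitters V lab A. u \<in> e}"

end

theory Submission
  imports Defs
begin

text \<open>An emitter has no out-arc in \<open>E\<^sup>-\<close> at all, since the out-arc of largest label of any
  vertex survives in \<open>E\<^sup>-\<^sub>T\<close>. Hence the arc along \<open>e\<^sup>-(u)\<close> of an emitter \<open>u\<close> enters \<open>u\<close>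
  from a non-emitter parent, and two emitters cannot share a parent: the one behind the smaller
  label would be the head of a non-top arc, which is reversed into an out-arc of it. So there
  are \<open>k \<le> n/2\<close> emitters. The cover consists of at most \<open>|E\<^sup>-| \<le> n\<close> edges of \<open>E\<^sup>-\<^sub>T\<close>
  and the \<open>k(n - k) + k(k - 1)/2\<close> edges at emitters; for \<open>k \<le> n/2\<close> the latter is at most
  \<open>3n\<^sup>2/8\<close>, attained at \<open>k = n/2\<close>.\<close>

lemma finite_out_neighbours: "finite A \<Longrightarrow> finite {u. (v, u) \<in> A}"
  by (rule finite_subset[of _ "snd ` A"]) force+

lemma outdeg_eq_0_iff: "finite A \<Longrightarrow> outdeg A v = 0 \<longleftrightarrow> (\<forall>u. (v, u) \<notin> A)"
  using finite_out_neighbours[of A v] unfolding outdeg_def by auto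

lemma ET_subset: "ET lab A \<subseteq> A \<union> A\<inverse>"
  unfolding ET_def non_top_arc_def by auto

lemma finite_ET: "finite A \<Longrightarrow> finite (ET lab A)"
  using ET_subset finite_subset by blast

lemma ET_keeps_top_arc:
  assumes "finite A" and "(v, w) \<in> A"
  shows "\<exists>u. (v, u) \<in> ET lab A"
proof -
  let ?N = "{u. (v, u) \<in> A}" and ?l = "\<lambda>u. lab {v, u}"
  have fin: "finite (?l ` ?N)" using finite_out_neighbours[OF assms(1)] by blast
  have "?N \<noteq> {}" using assms(2) by blast
  then obtain t where t: "t \<in> ?N" "?l t = Max (?l ` ?N)"
    using Max_in[OF fin] by (metis (no_types, lifting) image_iff image_is_empty)
  then have "\<not> non_top_arc lab A v t"
    using Max_ge[OF fin] unfolding non_top_arc_def by fastforce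
  with t(1) show ?thesis unfolding ET_def by blast
qed

lemma emitter_no_ET_arc:
  "finite A \<Longrightarrow> u \<in> emitters V lab A \<Longrightarrow> (u, w) \<notin> ET lab A"
  using outdeg_eq_0_iff[OF finite_ET] unfolding emitters_def by blast

lemma emitter_no_Eminus_arc:
  "finite A \<Longrightarrow> u \<in> emitters V lab A \<Longrightarrow> (u, w) \<notin> A"
  using ET_keeps_top_arc[of A u w lab] emitter_no_ET_arc[of A u V lab] by blast

lemma not_non_top_arc_to_emitter:
  assumes "finite A" and "u \<in> emitters V lab A"
  shows "\<not> non_top_arc lab A v u"
proof
  assume "non_top_arc lab A v u"
  moreover have "outdeg A u = 0"
    using outdeg_eq_0_iff[OF assms(1)] emitter_no_Eminus_arc[OF assms] by blast
  ultimately have "(u, v) \<in> ET lab A" unfolding ET_def by blast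
  with assms show False using emitter_no_ET_arc by blast
qed

lemma Eminus_arcD:
  assumes "valid_Eminus V lab A" and "(u, v) \<in> A"
  shows "u \<in> V" "v \<in> V" "u \<noteq> v" "{u, v} = emin V lab v"
  using assms unfolding valid_Eminus_def by auto

lemma valid_Eminus_covers_emin_edges:
  assumes "valid_Eminus V lab A" "u \<in> V" "v \<in> V" "u \<noteq> v" "{u, v} = emin V lab v"
  shows "(u, v) \<in> A \<or> (v, u) \<in> A"
proof -
  have "\<forall>u \<in> V. \<forall>v \<in> V. u \<noteq> v \<and> {u, v} = emin V lab v \<longrightarrow>
      (if emin V lab u = {u, v} then ((u, v) \<in> A \<longleftrightarrow> (v, u) \<notin> A) else (u, v) \<in> A)"
    using assms(1) unfolding valid_Eminus_def by (rule conjunct2)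
  from this[rule_format, OF assms(2,3)] assms(4,5) show ?thesis by (auto split: if_splits)
qed

lemma finite_Eminus:
  assumes "finite V" and "valid_Eminus V lab A"
  shows "finite A"
proof -
  have "A \<subseteq> V \<times> V" using Eminus_arcD[OF assms(2)] by auto
  then show ?thesis using assms(1) finite_subset by blast
qed

lemma card_Eminus_le:
  assumes "finite V" and "valid_Eminus V lab A"
  shows "card A \<le> card V"
proof -
  have "inj_on snd A"
  proof (rule inj_onI)
    fix a b assume a: "a \<in> A" and b: "b \<in> A" and "snd a = snd b"
    then obtain u w v where ab: "a = (u, v)" "b = (w, v)" by (metis prod.collapse)
    then have "{u, v} = {w, v}" using Eminus_arcD(4)[OF assms(2)] a b by metis
    then show "a = b" using ab by (auto simp: doubleton_eq_iff)
  qed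
  moreover have "snd ` A \<subseteq> V" using Eminus_arcD(2)[OF assms(2)] by auto
  ultimately show ?thesis using card_inj_on_le assms(1) by blast
qed

lemma emin_mem:
  assumes "u \<in> V" "v \<in> V" "u \<noteq> v"
  shows "emin V lab u \<in> clique_edges V" "u \<in> emin V lab u"
proof -
  have "emin V lab u \<in> clique_edges V \<and> u \<in> emin V lab u"
    unfolding emin_def
    by (rule arg_min_natI[where k = "{u, v}"]) (use assms in \<open>auto simp: clique_edges_def\<close>)
  then show "emin V lab u \<in> clique_edges V" "u \<in> emin V lab u" by blast+
qed

lemma Eminus_arc_along_emin:
  assumes "valid_Eminus V lab A" and "u \<in> V" "v \<in> V" "u \<noteq> v"
  shows "\<exists>p. (p, u) \<in> A \<or> (u, p) \<in> A"
proof -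
  obtain x y where xy: "emin V lab u = {x, y}" "x \<in> V" "y \<in> V" "x \<noteq> y" "u \<in> {x, y}"
    using emin_mem[OF assms(2-4), of lab] unfolding clique_edges_def by blast
  define p where "p = (if x = u then y else x)"
  have p: "p \<in> V" "p \<noteq> u" "{p, u} = emin V lab u" using xy unfolding p_def by auto
  then show ?thesis using valid_Eminus_covers_emin_edges[OF assms(1) p(1) assms(2) p(2,3)] by blast
qed

lemma emitter_has_parent:
  assumes "finite V" "valid_Eminus V lab A" "2 \<le> card V" "u \<in> emitters V lab A"
  shows "\<exists>p \<in> V - emitters V lab A. (p, u) \<in> A"
proof -
  have finA: "finite A" using finite_Eminus assms(1,2) .
  have uV: "u \<in> V" using assms(4) unfolding emitters_def by blast
  have "card (V - {u}) = card V - 1" using uV by (simp add: card_Diff_singleton)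
  then have "V - {u} \<noteq> {}" using assms(3) by (intro notI) simp
  then obtain v where "v \<in> V" "u \<noteq> v" by blast
  then obtain p where "(p, u) \<in> A \<or> (u, p) \<in> A"
    using Eminus_arc_along_emin[OF assms(2) uV] by blast
  then have pu: "(p, u) \<in> A" using emitter_no_Eminus_arc[OF finA assms(4)] by blast
  then have "p \<notin> emitters V lab A" using emitter_no_Eminus_arc[OF finA] by blast
  then show ?thesis using Eminus_arcD(1)[OF assms(2) pu] pu by blast
qed

lemma simple_temporal_clique_adjacent_labels_differ:
  assumes "simple_temporal_clique V lab" "p \<in> V" "u \<in> V" "w \<in> V" "p \<noteq> u" "p \<noteq> w" "u \<noteq> w"
  shows "lab {p, u} \<noteq> lab {p, w}"
proof -
  have simple: "\<forall>e \<in> clique_edges V. \<forall>f \<in> clique_edges V. e \<noteq> f \<and> e \<inter> f \<noteq> {} \<longrightarrow> lab e \<noteq> lab f"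
    using assms(1) unfolding simple_temporal_clique_def by (rule conjunct2)
  have edges: "{p, u} \<in> clique_edges V" "{p, w} \<in> clique_edges V"
    using assms(2-6) unfolding clique_edges_def by blast+
  have "{p, u} \<noteq> {p, w}" using assms(7) by (simp add: doubleton_eq_iff)
  moreover have "{p, u} \<inter> {p, w} \<noteq> {}" by simp
  ultimately show ?thesis using bspec[OF bspec[OF simple edges(1)] edges(2)] by blast
qed

text \<open>Of two emitters with a common parent, the one behind the smaller label would be the target
  of a non-top arc.\<close>
lemma emitters_parent_unique:
  assumes "simple_temporal_clique V lab" "valid_Eminus V lab A"
    and "u \<in> emitters V lab A" "w \<in> emitters V lab A" "(p, u) \<in> A" "(p, w) \<in> A"
  shows "u = w"
proof (rule ccontr)
  assume "u \<noteq> w"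
  have "finite V" using assms(1) by (simp add: simple_temporal_clique_def)
  then have finA: "finite A" using finite_Eminus assms(2) by blast
  have "card {u, w} \<le> outdeg A p"
    unfolding outdeg_def using assms(5,6) finite_out_neighbours[OF finA] by (intro card_mono) auto
  with \<open>u \<noteq> w\<close> have deg: "2 \<le> outdeg A p" by simp
  have "lab {p, u} \<noteq> lab {p, w}"
    using Eminus_arcD[OF assms(2) assms(5)] Eminus_arcD[OF assms(2) assms(6)] \<open>u \<noteq> w\<close>
    by (intro simple_temporal_clique_adjacent_labels_differ[OF assms(1)]) simp_all
  then consider "lab {p, u} < lab {p, w}" | "lab {p, w} < lab {p, u}" by linarith
  then have "non_top_arc lab A p u \<or> non_top_arc lab A p w"
    using assms(5,6) deg unfolding non_top_arc_def by cases blast+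
  then show False using not_non_top_arc_to_emitter[OF finA] assms(3,4) by blast
qed

lemma card_emitters_le:
  assumes "simple_temporal_clique V lab" "valid_Eminus V lab A" "2 \<le> card V"
  shows "2 * card (emitters V lab A) \<le> card V"
proof -
  let ?K = "emitters V lab A"
  have finV: "finite V" using assms(1) by (simp add: simple_temporal_clique_def)
  have KV: "?K \<subseteq> V" unfolding emitters_def by blast
  have "\<forall>u \<in> ?K. \<exists>p. p \<in> V - ?K \<and> (p, u) \<in> A"
    using emitter_has_parent[OF finV assms(2,3)] by blast
  then obtain parent where parent: "\<forall>u \<in> ?K. parent u \<in> V - ?K \<and> (parent u, u) \<in> A"
    by (rule bchoice[elim_format]) blast
  have "inj_on parent ?K"
  proof (rule inj_onI)
    fix u w assume "u \<in> ?K" "w \<in> ?K" "parent u = parent w"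
    then show "u = w"
      using emitters_parent_unique[OF assms(1,2), of u w "parent u"] parent by auto
  qed
  moreover have "parent ` ?K \<subseteq> V - ?K" using parent by blast
  ultimately have "card ?K \<le> card (V - ?K)"
    using finV by (intro card_inj_on_le) auto
  also have "\<dots> = card V - card ?K"
    using KV finV by (simp add: card_Diff_subset finite_subset)
  finally show ?thesis using card_mono[OF finV KV] by linarith
qed

lemma arc_edges_eq_image: "{{u, v} | u v. (u, v) \<in> R} = (\<lambda>(u, v). {u, v}) ` R"
  by auto

lemma arc_edges_ET_subset: "{{u, v} | u v. (u, v) \<in> ET lab A} \<subseteq> {{u, v} | u v. (u, v) \<in> A}"
proof -
  have "(\<lambda>(u, v). {u, v}) ` A\<inverse> = (\<lambda>(u, v). {u, v}) ` A" by (auto simp: insert_commute)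
  then show ?thesis unfolding arc_edges_eq_image using ET_subset[of lab A] by blast
qed

lemma card_clique_edges_meeting_le:
  assumes "finite V" "K \<subseteq> V"
  shows "card {e \<in> clique_edges V. \<exists>u \<in> K. u \<in> e} \<le> card K * (card V - card K) + (card K choose 2)"
proof -
  let ?cross = "(\<lambda>(u, v). {u, v}) ` (K \<times> (V - K))" and ?inner = "{B. B \<subseteq> K \<and> card B = 2}"
  have finK: "finite K" using assms finite_subset by blast
  have "{e \<in> clique_edges V. \<exists>u \<in> K. u \<in> e} \<subseteq> ?cross \<union> ?inner"
    unfolding clique_edges_def by (auto simp: insert_commute)
  then have "card {e \<in> clique_edges V. \<exists>u \<in> K. u \<in> e} \<le> card (?cross \<union> ?inner)"
    using assms(1) finK by (intro card_mono) auto
  also have "\<dots> \<le> card ?cross + card ?inner" by (rule card_Un_le)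
  also have "card ?cross \<le> card K * (card V - card K)"
    using card_image_le[of "K \<times> (V - K)"] assms finK
    by (simp add: card_cartesian_product card_Diff_subset)
  also have "card ?inner = card K choose 2" using n_subsets[OF finK] .
  finally show ?thesis by simp
qed

lemma card_fireworks_cover_le:
  assumes "simple_temporal_clique V lab" "valid_Eminus V lab A"
  defines "n \<equiv> card V" and "k \<equiv> card (emitters V lab A)"
  shows "card (fireworks_cover V lab A) \<le> n + (k * (n - k) + (k choose 2))"
proof -
  have finV: "finite V" using assms(1) by (simp add: simple_temporal_clique_def)
  have finA: "finite A" using finite_Eminus[OF finV assms(2)] .
  have "card {{u, v} | u v. (u, v) \<in> ET lab A} \<le> card {{u, v} | u v. (u, v) \<in> A}"
    using arc_edges_ET_subset finA by (intro card_mono) (simp_all add: arc_edges_eq_image)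
  also have "\<dots> \<le> card A" unfolding arc_edges_eq_image using finA by (rule card_image_le)
  also have "\<dots> \<le> n" unfolding n_def using finV assms(2) by (rule card_Eminus_le)
  finally have "card {{u, v} | u v. (u, v) \<in> ET lab A} \<le> n" .
  moreover have "card {e \<in> clique_edges V. \<exists>u \<in> emitters V lab A. u \<in> e} \<le> k * (n - k) + (k choose 2)"
    unfolding n_def k_def using finV by (intro card_clique_edges_meeting_le) (auto simp: emitters_def)
  moreover have "card (fireworks_cover V lab A) \<le> card {{u, v} | u v. (u, v) \<in> ET lab A}
      + card {e \<in> clique_edges V. \<exists>u \<in> emitters V lab A. u \<in> e}"
    unfolding fireworks_cover_def by (rule card_Un_le)
  ultimately show ?thesis by linarith
qed

lemma real_choose_two: "real (n choose 2) = real n * (real n - 1) / 2"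
  by (cases n) (auto simp: choose_two real_of_nat_div algebra_simps)

lemma fireworks_count_le:
  assumes "2 * k \<le> n + 1"
  shows "real (n + (k * (n - k) + (k choose 2))) \<le> 3 / 4 * real (n choose 2) + 2 * real n"
proof -
  have "k \<le> n" and "2 * k \<le> 3 * n" using assms by arith+
  then have "real (2 * k) \<le> real (n + 1)" "real (2 * k) \<le> real (3 * n)"
    using assms by (simp_all only: of_nat_le_iff)
  then have "0 \<le> (real n + 1 - 2 * real k) * (3 * real n - 2 * real k)"
    by (intro mult_nonneg_nonneg) simp_all
  moreover have "3 / 4 * (real n * (real n - 1) / 2) + 2 * real n
      - (real n + real k * (real n - real k) + real k * (real k - 1) / 2)
      = ((real n + 1 - 2 * real k) * (3 * real n - 2 * real k) + 2 * real n + 6 * real k) / 8"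
    by (simp add: field_simps)
  ultimately have "real n + real k * (real n - real k) + real k * (real k - 1) / 2
      \<le> 3 / 4 * (real n * (real n - 1) / 2) + 2 * real n"
    by (smt (verit) divide_nonneg_nonneg of_nat_0_le_iff)
  then show ?thesis
    by (simp only: of_nat_add of_nat_mult of_nat_diff[OF \<open>k \<le> n\<close>] real_choose_two add.assoc)
qed

theorem theorem3:
  shows "\<exists>C :: real. \<forall>(V :: nat set) (lab :: nat set \<Rightarrow> nat) (A :: (nat \<times> nat) set).
           simple_temporal_clique V lab \<and> valid_Eminus V lab A \<longrightarrow>
           real (card (fireworks_cover V lab A)) \<le> 3 / 4 * real (card V choose 2) + C * real (card V)"
proof (intro exI allI impI, elim conjE)
  fix V lab A
  assume st: "simple_temporal_clique V lab" and va: "valid_Eminus V lab A"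
  let ?n = "card V" and ?k = "card (emitters V lab A)"
  have "2 * ?k \<le> ?n + 1"
  proof (cases "2 \<le> ?n")
    case True
    then show ?thesis using card_emitters_le[OF st va] by linarith
  next
    case False
    have "?k \<le> ?n"
      using st by (intro card_mono) (auto simp: simple_temporal_clique_def emitters_def)
    with False show ?thesis by linarith
  qed
  have "real (card (fireworks_cover V lab A)) \<le> real (?n + (?k * (?n - ?k) + (?k choose 2)))"
    using card_fireworks_cover_le[OF st va] by (rule of_nat_mono)
  also have "\<dots> \<le> 3 / 4 * real (?n choose 2) + 2 * real ?n"
    using \<open>2 * ?k \<le> ?n + 1\<close> by (rule fireworks_count_le)
  finally show "real (card (fireworks_cover V lab A)) \<le> 3 / 4 * real (?n choose 2) + 2 * real ?n" .
qed

end
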